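(* Suppose there is $\theta\in\mathcal I$ with $\nu(\{\overline{\boldsymbol\theta}\in\Sigma:\theta_1=\theta\})>0$ such that for every $i\in[N]$, $f_\theta^{(i)}[\mathbf 0]+\sum_{j\in[N]}f_\theta^{(i)}[\mathbf e_j]<1.$ Then the multitype branching process in random environment $(\mathbf Z_n)$ is strongly regular.
   Context: $N\ge2$, $\mathcal I$ countable, $\Sigma=\mathcal I^{\mathbb N}$, $\nu$ a shift-invariant ergodic probability measure on $\Sigma$ (the law of the environment); $[N]=\{0,\dots,N-1\}$; $\mathbf e_j$ is the $j$-th unit vector and $\mathbf 0$ the zero vector of $\mathbb N_0^N$. For $\theta\in\mathcal I$, $f_\theta^{(i)}(\mathbf s)=\sum_{\mathbf z\in\mathbb N_0^N}f_\theta^{(i)}[\mathbf z]\mathbf s^{\mathbf z}$, $i\in[N]$, are pgfs on $\mathbb N_0^N$. In environment $\overline{\boldsymbol\theta}=(\theta_1,\theta_2,\dots)$, each type-$i$ individual of generation $n-1$ independently produces an offspring vector $\mathbf y$ ($y_j$ type-$j$ children) with probability $f_{\theta_n}^{(i)}[\mathbf y]$; $\mathbf Z_n$ is the sum and $\|\mathbf Z_n\|$ the total number of individuals. The process is strongly regular if there exists $n$ such that $\nu\big(\{\overline{\boldsymbol\theta}:\min_{i\in[N]}P_{\overline{\boldsymbol\theta}}(\|\mathbf Z_n\|>1\mid\mathbf Z_0=\mathbf e_i)>0\}\big)>0$, where $P_{\overline{\boldsymbol\theta}}$ is the law of the process in the fixed environment $\overline{\boldsymbol\theta}$. *)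

theory Defs
  imports "HOL-Probability.Probability"
begin

text \<open>Type vectors in N_0^N are represented as functions nat => nat (only the
coordinates 0..N-1 are relevant).  An environment is a sequence th :: nat => 'i,
where th k is the (k+1)-st environment theta_(k+1).  The offspring law of a
type-i individual in environment theta is a pmf f theta i on vectors.\<close>

definition unit_vec :: "nat \<Rightarrow> nat \<Rightarrow> nat" where
  "unit_vec j = (\<lambda>k. if k = j then 1 else 0)"

definition vnorm :: "nat \<Rightarrow> (nat \<Rightarrow> nat) \<Rightarrow> nat" where
  "vnorm N z = (\<Sum>j<N. z j)"

fun iid_sum :: "(nat \<Rightarrow> nat) pmf \<Rightarrow> nat \<Rightarrow> (nat \<Rightarrow> nat) pmf" where
  "iid_sum p 0 = return_pmf (\<lambda>_. 0)"
| "iid_sum p (Suc k) = bind_pmf p (\<lambda>y. map_pmf (\<lambda>s. (\<lambda>j. y j + s j)) (iid_sum p k))"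

fun children :: "(nat \<Rightarrow> (nat \<Rightarrow> nat) pmf) \<Rightarrow> nat \<Rightarrow> (nat \<Rightarrow> nat) \<Rightarrow> (nat \<Rightarrow> nat) pmf" where
  "children p 0 z = return_pmf (\<lambda>_. 0)"
| "children p (Suc m) z = bind_pmf (children p m z)
      (\<lambda>s. map_pmf (\<lambda>y. (\<lambda>j. s j + y j)) (iid_sum (p m) (z m)))"

fun Zlaw :: "('i \<Rightarrow> nat \<Rightarrow> (nat \<Rightarrow> nat) pmf) \<Rightarrow> nat \<Rightarrow> (nat \<Rightarrow> 'i) \<Rightarrow> (nat \<Rightarrow> nat) \<Rightarrow> nat
             \<Rightarrow> (nat \<Rightarrow> nat) pmf" where
  "Zlaw f N th z0 0 = return_pmf z0"
| "Zlaw f N th z0 (Suc n) = bind_pmf (Zlaw f N th z0 n) (\<lambda>z. children (f (th n)) N z)"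

definition env_space :: "(nat \<Rightarrow> 'i) measure" where
  "env_space = PiM UNIV (\<lambda>_. count_space UNIV)"

definition shift :: "(nat \<Rightarrow> 'i) \<Rightarrow> nat \<Rightarrow> 'i" where
  "shift th = (\<lambda>n. th (Suc n))"

definition shift_invariant_ergodic :: "(nat \<Rightarrow> 'i) measure \<Rightarrow> bool" where
  "shift_invariant_ergodic \<nu> \<longleftrightarrow>
     prob_space \<nu> \<and> sets \<nu> = sets env_space \<and>
     shift \<in> \<nu> \<rightarrow>\<^sub>M \<nu> \<and>
     (\<forall>A\<in>sets \<nu>. emeasure \<nu> (shift -` A \<inter> space \<nu>) = emeasure \<nu> A) \<and>
     (\<forall>A\<in>sets \<nu>. shift -` A \<inter> space \<nu> = A \<longrightarrow> emeasure \<nu> A = 0 \<or> emeasure \<nu> A = 1)"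

definition strongly_regular ::
  "('i \<Rightarrow> nat \<Rightarrow> (nat \<Rightarrow> nat) pmf) \<Rightarrow> nat \<Rightarrow> (nat \<Rightarrow> 'i) measure \<Rightarrow> bool" where
  "strongly_regular f N \<nu> \<longleftrightarrow>
     (\<exists>n. emeasure \<nu> {th \<in> space \<nu>.
        (MIN i\<in>{..<N}. measure_pmf.prob (Zlaw f N th (unit_vec i) n) {z. vnorm N z > 1}) > 0} > 0)"

end

theory Submission
  imports Defs
begin

text \<open>Strong regularity already holds with n = 1. Started from a single type-i individual,
Z_1 has law f_(theta_1)^(i), and the only vectors of norm at most 1 are 0 and the unit
vectors. So in every environment with theta_1 = theta each type has at least two children
with positive probability, and these environments have positive nu-measure.\<close>

lemma unit_vec_neq_zero: "unit_vec j \<noteq> (\<lambda>_. 0)"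
  by (auto simp: unit_vec_def fun_eq_iff)

lemma inj_unit_vec: "inj unit_vec"
  by (rule injI) (metis unit_vec_def zero_neq_one)

lemma vnorm_le_1_iff:
  assumes "\<And>k. k \<ge> N \<Longrightarrow> y k = 0"
  shows "vnorm N y \<le> 1 \<longleftrightarrow> y = (\<lambda>_. 0) \<or> (\<exists>j<N. y = unit_vec j)"
proof
  assume le: "vnorm N y \<le> 1"
  show "y = (\<lambda>_. 0) \<or> (\<exists>j<N. y = unit_vec j)"
  proof (cases "\<exists>j<N. y j \<noteq> 0")
    case False
    then show ?thesis using assms by (metis not_le ext)
  next
    case True
    then obtain j where j: "j < N" "y j \<noteq> 0" by blast
    have "y j + (\<Sum>k\<in>{..<N}-{j}. y k) = vnorm N y"
      using j(1) by (simp add: vnorm_def sum.remove)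
    then have "y j = 1" and "(\<Sum>k\<in>{..<N}-{j}. y k) = 0"
      using le j(2) by linarith+
    then have "y = unit_vec j"
      using assms by (auto simp: unit_vec_def fun_eq_iff not_less[symmetric])
    then show ?thesis using j(1) by blast
  qed
next
  show "y = (\<lambda>_. 0) \<or> (\<exists>j<N. y = unit_vec j) \<Longrightarrow> vnorm N y \<le> 1"
    by (auto simp: vnorm_def unit_vec_def)
qed

lemma prob_vnorm_le_1:
  fixes p :: "(nat \<Rightarrow> nat) pmf"
  assumes "\<And>y k. y \<in> set_pmf p \<Longrightarrow> k \<ge> N \<Longrightarrow> y k = 0"
  shows "measure_pmf.prob p {z. vnorm N z \<le> 1} = pmf p (\<lambda>_. 0) + (\<Sum>j<N. pmf p (unit_vec j))"
proof -
  define S where "S = insert (\<lambda>_. 0) (unit_vec ` {..<N})"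
  have "{z. vnorm N z \<le> 1} \<inter> set_pmf p = S \<inter> set_pmf p"
    using vnorm_le_1_iff assms by (auto simp: S_def)
  then have "measure_pmf.prob p {z. vnorm N z \<le> 1} = measure_pmf.prob p S"
    by (metis measure_Int_set_pmf)
  also have "\<dots> = (\<Sum>x\<in>S. pmf p x)"
    by (simp add: S_def measure_measure_pmf_finite)
  also have "\<dots> = pmf p (\<lambda>_. 0) + (\<Sum>j<N. pmf p (unit_vec j))"
  proof -
    have "(\<lambda>_. 0) \<notin> unit_vec ` {..<N}"
      by (metis imageE unit_vec_neq_zero)
    then show ?thesis
      by (simp add: S_def sum.reindex inj_on_subset[OF inj_unit_vec])
  qed
  finally show ?thesis .
qed

lemma prob_vnorm_gt_1_pos:
  fixes p :: "(nat \<Rightarrow> nat) pmf"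
  assumes "\<And>y k. y \<in> set_pmf p \<Longrightarrow> k \<ge> N \<Longrightarrow> y k = 0"
    and "pmf p (\<lambda>_. 0) + (\<Sum>j<N. pmf p (unit_vec j)) < 1"
  shows "measure_pmf.prob p {z. vnorm N z > 1} > 0"
proof -
  have "{z. vnorm N z > 1} = space (measure_pmf p) - {z. vnorm N z \<le> 1}"
    by auto
  then have "measure_pmf.prob p {z. vnorm N z > 1} = 1 - measure_pmf.prob p {z. vnorm N z \<le> 1}"
    using measure_pmf.prob_compl[of "{z. vnorm N z \<le> 1}" p] by simp
  moreover have "measure_pmf.prob p {z. vnorm N z \<le> 1} = pmf p (\<lambda>_. 0) + (\<Sum>j<N. pmf p (unit_vec j))"
    using assms(1) by (rule prob_vnorm_le_1)
  ultimately show ?thesis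
    using assms(2) by linarith
qed

lemma children_unit_vec:
  "children p m (unit_vec i) = (if i < m then p i else return_pmf (\<lambda>_. 0))"
proof (induction m)
  case 0
  then show ?case by simp
next
  case (Suc m)
  then show ?case
    by (cases "m = i")
      (auto simp: unit_vec_def map_pmf_def bind_return_pmf bind_return_pmf' pmf.map_id0)
qed

lemma Zlaw_unit_vec_Suc_0: "i < N \<Longrightarrow> Zlaw f N th (unit_vec i) (Suc 0) = f (th 0) i"
  by (simp add: bind_return_pmf children_unit_vec)

lemma sets_first_coordinate:
  assumes "sets \<nu> = sets env_space"
  shows "{th \<in> space \<nu>. P (th 0)} \<in> sets \<nu>"
proof -
  have "(\<lambda>th. th 0) \<in> \<nu> \<rightarrow>\<^sub>M count_space UNIV"
    using measurable_cong_sets[OF assms refl] unfolding env_space_def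
    by (metis measurable_component_singleton UNIV_I)
  from measurable_sets[OF this, of "{t. P t}"] show ?thesis
    by (simp add: vimage_def Int_def conj_commute)
qed

theorem fact4p7:
  fixes f :: "'i::countable \<Rightarrow> nat \<Rightarrow> (nat \<Rightarrow> nat) pmf"
    and N :: nat and \<nu> :: "(nat \<Rightarrow> 'i) measure" and \<theta> :: 'i
  assumes "N \<ge> 2"
    and "\<And>t i y k. y \<in> set_pmf (f t i) \<Longrightarrow> k \<ge> N \<Longrightarrow> y k = 0"
    and "shift_invariant_ergodic \<nu>"
    and "emeasure \<nu> {th \<in> space \<nu>. th 0 = \<theta>} > 0"
    and "\<And>i. i < N \<Longrightarrow> pmf (f \<theta> i) (\<lambda>_. 0) + (\<Sum>j<N. pmf (f \<theta> i) (unit_vec j)) < 1"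
  shows "strongly_regular f N \<nu>"
proof -
  let ?P = "\<lambda>t. (MIN i\<in>{..<N}. measure_pmf.prob (f t i) {z. vnorm N z > 1}) > 0"
  have one_step: "{th \<in> space \<nu>.
      (MIN i\<in>{..<N}. measure_pmf.prob (Zlaw f N th (unit_vec i) 1) {z. vnorm N z > 1}) > 0}
      = {th \<in> space \<nu>. ?P (th 0)}"
    by (simp del: Zlaw.simps add: Zlaw_unit_vec_Suc_0)
  have "{..<N} \<noteq> {}"
    using assms(1) by (simp add: lessThan_empty_iff)
  then have "?P \<theta>"
    using assms(2,5) prob_vnorm_gt_1_pos by (subst Min_gr_iff) auto
  then have "{th \<in> space \<nu>. th 0 = \<theta>} \<subseteq> {th \<in> space \<nu>. ?P (th 0)}"
    by auto
  moreover have "{th \<in> space \<nu>. ?P (th 0)} \<in> sets \<nu>"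
    using assms(3) by (intro sets_first_coordinate) (simp add: shift_invariant_ergodic_def)
  ultimately have "emeasure \<nu> {th \<in> space \<nu>. th 0 = \<theta>} \<le> emeasure \<nu> {th \<in> space \<nu>. ?P (th 0)}"
    by (rule emeasure_mono)
  with assms(4) have "emeasure \<nu> {th \<in> space \<nu>. ?P (th 0)} > 0"
    by (rule order.strict_trans2)
  then show ?thesis
    unfolding strongly_regular_def one_step[symmetric] by blast
qed

end
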